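(* Let $k$ be a positive integer and let $H_k$ be the graph with half-edges obtained from the complete bipartite graph $K_{k,k}$ by deleting one vertex but keeping its $k$ incident edges as half-edges (each attached only at its other end vertex). Then $H_k$ is type 1, i.e. it admits a $(k+1)$-total colouring. Moreover, in every $(k+1)$-total colouring of $H_k$, all $k$ half-edges receive the same colour.
   Context: Graphs may contain half-edges: a half-edge has exactly one end vertex. A $(k+1)$-total colouring of such a graph assigns to each vertex, each edge and each half-edge one of $k+1$ colours so that no two adjacent vertices, no two edges/half-edges sharing an end vertex, and no vertex together with an edge or half-edge incident with it receive the same colour. The maximum degree of $H_k$ (counting half-edges) is $k$, and "type 1" means it has a total colouring with maximum degree $+1$ colours. *)

theory Defs
  imports Main
begin

text \<open>A graph with half-edges is given by a vertex set V, a set E of (ordinary)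
edges, each a 2-element set of vertices, a set Hf of half-edges, and a map
hend assigning to each half-edge its unique end vertex.\<close>

definition total_colouring ::
  "'v set \<Rightarrow> 'v set set \<Rightarrow> 'h set \<Rightarrow> ('h \<Rightarrow> 'v) \<Rightarrow> nat \<Rightarrow>
   ('v \<Rightarrow> nat) \<Rightarrow> ('v set \<Rightarrow> nat) \<Rightarrow> ('h \<Rightarrow> nat) \<Rightarrow> bool" where
  "total_colouring V E Hf hend n cv ce ch \<longleftrightarrow>
     (\<forall>v\<in>V. cv v < n) \<and> (\<forall>e\<in>E. ce e < n) \<and> (\<forall>h\<in>Hf. ch h < n) \<and>
     \<comment> \<open>adjacent vertices\<close>
     (\<forall>u\<in>V. \<forall>v\<in>V. {u, v} \<in> E \<longrightarrow> cv u \<noteq> cv v) \<and>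
     \<comment> \<open>two distinct edges sharing an end vertex\<close>
     (\<forall>e\<in>E. \<forall>e'\<in>E. e \<noteq> e' \<and> e \<inter> e' \<noteq> {} \<longrightarrow> ce e \<noteq> ce e') \<and>
     \<comment> \<open>an edge and a half-edge sharing an end vertex\<close>
     (\<forall>e\<in>E. \<forall>h\<in>Hf. hend h \<in> e \<longrightarrow> ce e \<noteq> ch h) \<and>
     \<comment> \<open>two distinct half-edges sharing an end vertex\<close>
     (\<forall>h\<in>Hf. \<forall>h'\<in>Hf. h \<noteq> h' \<and> hend h = hend h' \<longrightarrow> ch h \<noteq> ch h') \<and>
     \<comment> \<open>a vertex and an incident edge\<close>
     (\<forall>v\<in>V. \<forall>e\<in>E. v \<in> e \<longrightarrow> cv v \<noteq> ce e) \<and>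
     \<comment> \<open>a vertex and an incident half-edge\<close>
     (\<forall>v\<in>V. \<forall>h\<in>Hf. hend h = v \<longrightarrow> cv v \<noteq> ch h)"

text \<open>H_k: start from K_{k,k} with sides Inl 0..k-1 and Inr 0..k-1, delete
the vertex Inr (k-1) and keep its k incident edges as half-edges; half-edge i
(for i < k) has end vertex Inl i.\<close>

definition Hk_V :: "nat \<Rightarrow> (nat + nat) set" where
  "Hk_V k = Inl ` {..<k} \<union> Inr ` {..<k-1}"

definition Hk_E :: "nat \<Rightarrow> (nat + nat) set set" where
  "Hk_E k = {{Inl i, Inr j} | i j. i < k \<and> j < k - 1}"

definition Hk_H :: "nat \<Rightarrow> nat set" where
  "Hk_H k = {..<k}"

definition Hk_end :: "nat \<Rightarrow> nat + nat" where
  "Hk_end i = Inl i"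

end

theory Submission
  imports Defs "HOL-Number_Theory.Cong"
begin

text \<open>Every vertex of \<open>H\<^sub>k\<close> has degree \<open>k\<close>, so in a \<open>(k+1)\<close>-total colouring it sees
each colour exactly once among itself and its incident edges and half-edges. For a colour \<open>c\<close>
let \<open>a\<^sub>c\<close>, \<open>h\<^sub>c\<close>, \<open>b\<^sub>c\<close> count the vertices carrying half-edges, the half-edges and the
remaining \<open>k - 1\<close> vertices of colour \<open>c\<close>. Counting the edges of colour \<open>c\<close> from both
sides gives \<open>a\<^sub>c + h\<^sub>c = b\<^sub>c + 1\<close>. If \<open>b\<^sub>c > 0\<close> then \<open>a\<^sub>c = 0\<close> (the two sides are
completely joined), so \<open>h\<^sub>c = b\<^sub>c + 1\<close>; as \<open>\<Sum> h\<^sub>c = k\<close> and \<open>\<Sum> b\<^sub>c = k - 1\<close>, only one colour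
can have \<open>b\<^sub>c > 0\<close>, and all \<open>k\<close> half-edges carry it.

A colouring exists: colour the edges of \<open>K\<^sub>k\<^sub>,\<^sub>k\<close> by \<open>1 + (i + j) mod k\<close>, give each vertex
\<open>Inl i\<close> the colour of its edge to the deleted vertex, and colour all other vertices and all
half-edges \<open>0\<close>.\<close>

lemma count_list_distinct: "distinct xs \<Longrightarrow> count_list xs x = of_bool (x \<in> set xs)"
  by (induction xs) auto

lemma distinct_count_list_eq_1:
  assumes "distinct xs" "set xs \<subseteq> {..<length xs}" "x < length xs"
  shows "count_list xs x = 1"
proof -
  have "set xs = {..<length xs}"
    using assms(1,2) by (intro card_subset_eq) (simp_all add: distinct_card)
  with assms show ?thesis by (simp add: count_list_distinct)
qed

lemma count_list_map_upt: "count_list (map f [0..<n]) x = (\<Sum>i<n. of_bool (f i = x))"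
  by (induction n) auto

lemma sum_of_bool_fibres:
  assumes "finite A" "finite C" "f ` A \<subseteq> C"
  shows "(\<Sum>c\<in>C. \<Sum>x\<in>A. of_bool (f x = c)) = card A"
proof -
  have "(\<Sum>c\<in>C. \<Sum>x\<in>A. of_bool (f x = c)) = (\<Sum>x\<in>A. \<Sum>c\<in>C. of_bool (f x = c))"
    by (rule sum.swap)
  also have "\<dots> = (\<Sum>x\<in>A. 1)"
    using assms by (intro sum.cong) (auto simp: of_bool_def sum.delta')
  also have "\<dots> = card A"
    by simp
  finally show ?thesis .
qed

context
  fixes V :: "'v set" and E Hf hend n cv ce ch
  assumes tc: "total_colouring V E Hf hend n cv ce ch"
begin

lemma total_colouring_less:
  "v \<in> V \<Longrightarrow> cv v < n" "e \<in> E \<Longrightarrow> ce e < n" "h \<in> Hf \<Longrightarrow> ch h < n"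
  using tc unfolding total_colouring_def by auto

lemma total_colouring_adjacent_vertices: "u \<in> V \<Longrightarrow> v \<in> V \<Longrightarrow> {u, v} \<in> E \<Longrightarrow> cv u \<noteq> cv v"
  using tc unfolding total_colouring_def by auto

lemma total_colouring_adjacent_edges:
  assumes "e \<in> E" "e' \<in> E" "e \<noteq> e'" "x \<in> e" "x \<in> e'"
  shows "ce e \<noteq> ce e'"
proof -
  have "e \<inter> e' \<noteq> {}" using assms(4,5) by blast
  with tc assms(1-3) show ?thesis unfolding total_colouring_def by simp
qed

lemma total_colouring_edge_half_edge: "e \<in> E \<Longrightarrow> h \<in> Hf \<Longrightarrow> hend h \<in> e \<Longrightarrow> ce e \<noteq> ch h"
  using tc unfolding total_colouring_def by auto

lemma total_colouring_vertex_edge: "v \<in> V \<Longrightarrow> e \<in> E \<Longrightarrow> v \<in> e \<Longrightarrow> cv v \<noteq> ce e"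
  using tc unfolding total_colouring_def by auto

lemma total_colouring_vertex_half_edge: "h \<in> Hf \<Longrightarrow> hend h \<in> V \<Longrightarrow> cv (hend h) \<noteq> ch h"
  using tc unfolding total_colouring_def by auto

end

lemma colour_balance:
  fixes E :: "nat \<Rightarrow> nat \<Rightarrow> 'c" and a b h :: "nat \<Rightarrow> 'c"
  assumes row: "\<And>i. i < m \<Longrightarrow>
      (\<Sum>j<n. of_bool (E i j = c)) + of_bool (a i = c) + of_bool (h i = c) = (1::nat)"
    and column: "\<And>j. j < n \<Longrightarrow> (\<Sum>i<m. of_bool (E i j = c)) + of_bool (b j = c) = (1::nat)"
  shows "(\<Sum>i<m. of_bool (a i = c)) + (\<Sum>i<m. of_bool (h i = c)) + n =
    (\<Sum>j<n. of_bool (b j = c)) + (m::nat)"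
proof -
  have "(\<Sum>i<m. (\<Sum>j<n. of_bool (E i j = c)) + of_bool (a i = c) + of_bool (h i = c)) = (\<Sum>i<m. 1::nat)"
    using row by (intro sum.cong) auto
  then have rows: "(\<Sum>i<m. \<Sum>j<n. of_bool (E i j = c)) + (\<Sum>i<m. of_bool (a i = c))
      + (\<Sum>i<m. of_bool (h i = c)) = (m::nat)"
    by (simp only: sum.distrib) simp
  have "(\<Sum>j<n. (\<Sum>i<m. of_bool (E i j = c)) + of_bool (b j = c)) = (\<Sum>j<n. 1::nat)"
    using column by (intro sum.cong) auto
  then have columns: "(\<Sum>j<n. \<Sum>i<m. of_bool (E i j = c)) + (\<Sum>j<n. of_bool (b j = c)) = (n::nat)"
    by (simp only: sum.distrib) simp
  have "(\<Sum>i<m. \<Sum>j<n. of_bool (E i j = c)) = (\<Sum>j<n. \<Sum>i<m. of_bool (E i j = c) :: nat)"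
    by (rule sum.swap)
  with rows columns show ?thesis by linarith
qed

text \<open>Row \<open>i < k\<close> is a vertex carrying the half-edge \<open>h i\<close>, column \<open>j < k - 1\<close> a vertex of
the other side, \<open>E i j\<close> the edge between them; \<open>row\<close> and \<open>column\<close> say that each vertex sees
every colour \<open>c \<le> k\<close> exactly once.\<close>

lemma half_edge_colour_forced:
  fixes E :: "nat \<Rightarrow> nat \<Rightarrow> nat" and a b h :: "nat \<Rightarrow> nat"
  assumes row: "\<And>i c. i < k \<Longrightarrow> c \<le> k \<Longrightarrow>
      (\<Sum>j<k-1. of_bool (E i j = c)) + of_bool (a i = c) + of_bool (h i = c) = (1::nat)"
    and column: "\<And>j c. j < k - 1 \<Longrightarrow> c \<le> k \<Longrightarrow>
      (\<Sum>i<k. of_bool (E i j = c)) + of_bool (b j = c) = (1::nat)"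
    and adjacent: "\<And>i j. i < k \<Longrightarrow> j < k - 1 \<Longrightarrow> a i \<noteq> b j"
    and h_le: "\<And>i. i < k \<Longrightarrow> h i \<le> k" and b_le: "\<And>j. j < k - 1 \<Longrightarrow> b j \<le> k"
    and k: "1 < k" and i: "i < k"
  shows "h i = b 0"
proof -
  define A where "A c = (\<Sum>i<k. of_bool (a i = c) :: nat)" for c
  define H where "H c = (\<Sum>i<k. of_bool (h i = c) :: nat)" for c
  define B where "B c = (\<Sum>j<k-1. of_bool (b j = c) :: nat)" for c
  have H_eq: "H c = B c + 1" if "c \<le> k" "B c \<noteq> 0" for c
  proof -
    obtain j where "j < k - 1" "b j = c"
      using \<open>B c \<noteq> 0\<close> by (auto simp: B_def)
    then have "A c = 0"
      using adjacent by (auto simp: A_def)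
    moreover have "A c + H c + (k - 1) = B c + k"
      unfolding A_def H_def B_def using row column \<open>c \<le> k\<close> by (intro colour_balance)
    ultimately show ?thesis using k by linarith
  qed
  have H_total: "(\<Sum>c\<le>k. H c) = k"
    unfolding H_def using h_le by (subst sum_of_bool_fibres) auto
  have B_total: "(\<Sum>c\<le>k. B c) = k - 1"
    unfolding B_def using b_le by (subst sum_of_bool_fibres) auto
  define S where "S = {c. c \<le> k \<and> B c \<noteq> 0}"
  have S: "finite S" "S \<subseteq> {..k}"
    by (auto simp: S_def)
  have "b 0 \<in> S"
    using k b_le[of 0] member_le_sum[of 0 "{..<k-1}" "\<lambda>j. of_bool (b j = b 0) :: nat"]
    by (auto simp: S_def B_def)
  have B_S: "(\<Sum>c\<in>S. B c) = k - 1"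
    using B_total S by (subst sum.mono_neutral_left[of "{..k}"]) (auto simp: S_def)
  have "(\<Sum>c\<in>S. B c) + card S = (\<Sum>c\<in>S. B c + 1)"
    by (simp only: sum.distrib card_eq_sum)
  also have "\<dots> = (\<Sum>c\<in>S. H c)"
    using H_eq by (intro sum.cong) (auto simp: S_def)
  also have "\<dots> \<le> k"
    using H_total S by (metis sum_mono2 finite_atMost zero_le)
  finally have "card S \<le> 1"
    using B_S k by linarith
  with \<open>b 0 \<in> S\<close> S have "S = {b 0}"
    by (auto simp: card_le_Suc0_iff_eq)
  then have "H (b 0) = k"
    using B_S H_eq[of "b 0"] k by (auto simp: S_def)
  then have "{i. i < k \<and> h i = b 0} = {..<k}"
    unfolding H_def by (intro card_subset_eq) (auto simp: Int_def)
  with i show ?thesis by auto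
qed

lemma Hk_edge_iff: "{Inl i, Inr j} \<in> Hk_E k \<longleftrightarrow> i < k \<and> j < k - 1"
  by (auto simp: Hk_E_def doubleton_eq_iff)

lemma Hk_vertex_iff [simp]: "Inl i \<in> Hk_V k \<longleftrightarrow> i < k" "Inr j \<in> Hk_V k \<longleftrightarrow> j < k - 1"
  by (auto simp: Hk_V_def)

lemma add_mod_left_cancel_less:
  fixes a x y n :: nat
  assumes "(a + x) mod n = (a + y) mod n" "x < n" "y < n"
  shows "x = y"
  using assms cong_add_lcancel_nat cong_less_modulus_unique_nat unfolding cong_def by blast

lemma Hk_total_colouring_exists:
  assumes "0 < k"
  shows "\<exists>cv ce ch. total_colouring (Hk_V k) (Hk_E k) (Hk_H k) Hk_end (k + 1) cv ce ch"
proof -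
  define cv :: "nat + nat \<Rightarrow> nat" where
    "cv v = (case v of Inl i \<Rightarrow> 1 + (i + (k - 1)) mod k | Inr _ \<Rightarrow> 0)" for v
  define ce :: "(nat + nat) set \<Rightarrow> nat" where
    "ce e = 1 + (\<Sum>x\<in>e. case x of Inl i \<Rightarrow> i | Inr j \<Rightarrow> j) mod k" for e
  have ce_edge: "ce {Inl i, Inr j} = 1 + (i + j) mod k" for i j
    by (simp add: ce_def)
  have "total_colouring (Hk_V k) (Hk_E k) (Hk_H k) Hk_end (k + 1) cv ce (\<lambda>_. 0)"
    unfolding total_colouring_def
  proof (intro conjI)
    show "\<forall>e\<in>Hk_E k. \<forall>e'\<in>Hk_E k. e \<noteq> e' \<and> e \<inter> e' \<noteq> {} \<longrightarrow> ce e \<noteq> ce e'"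
    proof (intro ballI impI)
      fix e e' assume "e \<in> Hk_E k" "e' \<in> Hk_E k" and adjacent: "e \<noteq> e' \<and> e \<inter> e' \<noteq> {}"
      from \<open>e \<in> Hk_E k\<close> \<open>e' \<in> Hk_E k\<close> obtain i j i' j' where e: "e = {Inl i, Inr j}" "e' = {Inl i', Inr j'}"
        and "i < k" "i' < k" "j < k - 1" "j' < k - 1"
        unfolding Hk_E_def by blast
      moreover have "i = i' \<and> j \<noteq> j' \<or> j = j' \<and> i \<noteq> i'"
        using adjacent unfolding e by auto
      moreover have "j < k" "j' < k"
        using \<open>j < k - 1\<close> \<open>j' < k - 1\<close> by auto
      ultimately show "ce e \<noteq> ce e'"
        using add_mod_left_cancel_less[of i j k j'] add_mod_left_cancel_less[of j i k i']
        by (auto simp: ce_edge add.commute)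
    qed
    show "\<forall>v\<in>Hk_V k. \<forall>e\<in>Hk_E k. v \<in> e \<longrightarrow> cv v \<noteq> ce e"
    proof (intro ballI impI)
      fix v e assume "v \<in> Hk_V k" "e \<in> Hk_E k" "v \<in> e"
      then obtain i j where "e = {Inl i, Inr j}" "i < k" "j < k - 1" "v = Inl i \<or> v = Inr j"
        by (auto simp: Hk_E_def)
      moreover have "j < k"
        using \<open>j < k - 1\<close> by simp
      ultimately show "cv v \<noteq> ce e"
        using add_mod_left_cancel_less[of i "k - 1" k j] \<open>0 < k\<close> by (auto simp: cv_def ce_edge)
    qed
  qed (use \<open>0 < k\<close> in \<open>auto simp: Hk_V_def Hk_E_def Hk_H_def Hk_end_def cv_def ce_edge doubleton_eq_iff\<close>)
  then show ?thesis by blast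
qed

context
  fixes k :: nat and cv ce ch
  assumes tc: "total_colouring (Hk_V k) (Hk_E k) (Hk_H k) Hk_end (k + 1) cv ce ch"
begin

lemma Hk_colour_bounds: "i < k \<Longrightarrow> ch i \<le> k" "j < k - 1 \<Longrightarrow> cv (Inr j) \<le> k"
  using total_colouring_less(1)[OF tc, of "Inr j"] total_colouring_less(3)[OF tc, of i]
  by (simp_all add: Hk_H_def)

lemma Hk_Inl_Inr_colours_differ: "i < k \<Longrightarrow> j < k - 1 \<Longrightarrow> cv (Inl i) \<noteq> cv (Inr j)"
  using total_colouring_adjacent_vertices[OF tc] by (simp add: Hk_edge_iff)

lemma Hk_colours_at_Inl:
  assumes i: "i < k" and c: "c \<le> k"
  shows "(\<Sum>j<k-1. of_bool (ce {Inl i, Inr j} = c)) + of_bool (cv (Inl i) = c) + of_bool (ch i = c) = (1::nat)"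
proof -
  let ?xs = "map (\<lambda>j. ce {Inl i, Inr j}) [0..<k-1] @ [cv (Inl i), ch i]"
  have edge: "{Inl i, Inr j} \<in> Hk_E k" if "j < k - 1" for j
    using i that by (simp add: Hk_edge_iff)
  have half_edge: "i \<in> Hk_H k" and "Hk_end i = Inl i"
    using i by (simp_all add: Hk_H_def Hk_end_def)
  have "inj_on (\<lambda>j. ce {Inl i, Inr j}) {..<k-1}"
  proof (rule inj_onI, rule ccontr)
    fix j j' assume "j \<in> {..<k-1}" "j' \<in> {..<k-1}" "j \<noteq> j'"
    then show "ce {Inl i, Inr j} = ce {Inl i, Inr j'} \<Longrightarrow> False"
      using total_colouring_adjacent_edges[OF tc edge edge, of j j' "Inl i"] by (auto simp: doubleton_eq_iff)
  qed
  moreover have "cv (Inl i) \<noteq> ce {Inl i, Inr j}" "ch i \<noteq> ce {Inl i, Inr j}" if "j < k - 1" for j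
    using total_colouring_vertex_edge[OF tc _ edge[OF that], of "Inl i"]
      total_colouring_edge_half_edge[OF tc edge[OF that] half_edge] i
    by (auto simp: Hk_end_def)
  moreover have "cv (Inl i) \<noteq> ch i"
    using total_colouring_vertex_half_edge[OF tc half_edge] i by (simp add: Hk_end_def)
  ultimately have "distinct ?xs" by (auto simp: distinct_map atLeast0LessThan)
  moreover have "set ?xs \<subseteq> {..<length ?xs}"
    using i edge half_edge total_colouring_less[OF tc] by auto
  ultimately have "count_list ?xs c = 1"
    using i c by (intro distinct_count_list_eq_1) simp_all
  moreover have "count_list ?xs c =
      (\<Sum>j<k-1. of_bool (ce {Inl i, Inr j} = c)) + of_bool (cv (Inl i) = c) + of_bool (ch i = c)"
    by (simp add: count_list_map_upt)
  ultimately show ?thesis by linarith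
qed

lemma Hk_colours_at_Inr:
  assumes j: "j < k - 1" and c: "c \<le> k"
  shows "(\<Sum>i<k. of_bool (ce {Inl i, Inr j} = c)) + of_bool (cv (Inr j) = c) = (1::nat)"
proof -
  let ?xs = "map (\<lambda>i. ce {Inl i, Inr j}) [0..<k] @ [cv (Inr j)]"
  have edge: "{Inl i, Inr j} \<in> Hk_E k" if "i < k" for i
    using j that by (simp add: Hk_edge_iff)
  have "inj_on (\<lambda>i. ce {Inl i, Inr j}) {..<k}"
  proof (rule inj_onI, rule ccontr)
    fix i i' assume "i \<in> {..<k}" "i' \<in> {..<k}" "i \<noteq> i'"
    then show "ce {Inl i, Inr j} = ce {Inl i', Inr j} \<Longrightarrow> False"
      using total_colouring_adjacent_edges[OF tc edge edge, of i i' "Inr j"] by (auto simp: doubleton_eq_iff)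
  qed
  moreover have "cv (Inr j) \<noteq> ce {Inl i, Inr j}" if "i < k" for i
    using total_colouring_vertex_edge[OF tc _ edge[OF that], of "Inr j"] j by auto
  ultimately have "distinct ?xs" by (auto simp: distinct_map atLeast0LessThan)
  moreover have "set ?xs \<subseteq> {..<length ?xs}"
    using j edge total_colouring_less[OF tc] by auto
  ultimately have "count_list ?xs c = 1"
    using j c by (intro distinct_count_list_eq_1) simp_all
  moreover have "count_list ?xs c = (\<Sum>i<k. of_bool (ce {Inl i, Inr j} = c)) + of_bool (cv (Inr j) = c)"
    by (simp add: count_list_map_upt)
  ultimately show ?thesis by linarith
qed

end

theorem lemma2:
  fixes k :: nat
  assumes "k > 0"
  shows "(\<exists>cv ce ch. total_colouring (Hk_V k) (Hk_E k) (Hk_H k) Hk_end (k + 1) cv ce ch) \<and>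
         (\<forall>cv ce ch. total_colouring (Hk_V k) (Hk_E k) (Hk_H k) Hk_end (k + 1) cv ce ch \<longrightarrow>
            (\<forall>h\<in>Hk_H k. \<forall>h'\<in>Hk_H k. ch h = ch h'))"
proof (intro conjI allI impI ballI)
  show "\<exists>cv ce ch. total_colouring (Hk_V k) (Hk_E k) (Hk_H k) Hk_end (k + 1) cv ce ch"
    using Hk_total_colouring_exists[OF assms] .
next
  fix cv ce ch h h'
  assume tc: "total_colouring (Hk_V k) (Hk_E k) (Hk_H k) Hk_end (k + 1) cv ce ch"
    and "h \<in> Hk_H k" "h' \<in> Hk_H k"
  then have "h < k" "h' < k"
    by (simp_all add: Hk_H_def)
  show "ch h = ch h'"
  proof (cases "k = 1")
    case True
    with \<open>h < k\<close> \<open>h' < k\<close> show ?thesis by simp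
  next
    case False
    have "ch i = cv (Inr 0)" if "i < k" for i
      by (rule half_edge_colour_forced[where E = "\<lambda>i j. ce {Inl i, Inr j}" and a = "\<lambda>i. cv (Inl i)"])
        (fact Hk_colours_at_Inl[OF tc] Hk_colours_at_Inr[OF tc] Hk_Inl_Inr_colours_differ[OF tc]
          Hk_colour_bounds[OF tc] | use that False assms in linarith)+
    with \<open>h < k\<close> \<open>h' < k\<close> show ?thesis by simp
  qed
qed

end
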